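(* Let $G$ be a finite simple graph and let $v_1,\dots,v_r$, $r\ge 2$, be an $\alpha$-sequence in $G$ such that $N(v_1,\dots,v_{r-1})$ is a $\delta$-set in $G$. Then (a) $\varphi(G)\le r\le \omega(G)$; and (b) $r\ge W(G)$.
   Context: Graphs are finite, undirected, without loops or multiple edges; $n=|V(G)|$, $N(v)$ is the set of vertices adjacent to $v$, $d(v)=|N(v)|$, and for $V\subseteq V(G)$, $N(V)=\bigcap_{v\in V}N(v)$; $N(v_1,\dots,v_k)$ means $N(\{v_1,\dots,v_k\})$. $\omega(G)$ is the clique number of $G$ (largest $p$ such that $G$ has $p$ pairwise adjacent vertices). For $V\subseteq V(G)$ define $W(V)=\sum_{v\in V}\frac{1}{n-d(v)}$ and $W(G)=W(V(G))$. A set $V\subseteq V(G)$ is a $\delta$-set in $G$ if $d(v)\le n-|V|$ for all $v\in V$. $G$ is a generalized $r$-partite graph if $V(G)=V_1\cup\dots\cup V_r$ with $V_i\cap V_j=\emptyset$ for $i\ne j$ and each $V_i$ a $\delta$-set in $G$; $\varphi(G)$ is the smallest such $r$. A sequence $v_1,\dots,v_r$ of vertices is an $\alpha$-sequence in $G$ if (i) $d(v_1)=\max\{d(v)\mid v\in V(G)\}$, and (ii) for $2\le i\le r$, $v_i\in N(v_1,\dots,v_{i-1})$ and $v_i$ has maximal degree in the induced subgraph $G[N(v_1,\dots,v_{i-1})]$. *)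

theory Defs
  imports Complex_Main
begin

definition simple_graph :: "'a set \<Rightarrow> ('a \<Rightarrow> 'a \<Rightarrow> bool) \<Rightarrow> bool" where
  "simple_graph V E \<longleftrightarrow> finite V \<and> (\<forall>u v. E u v \<longrightarrow> u \<in> V \<and> v \<in> V)
     \<and> (\<forall>u v. E u v \<longrightarrow> E v u) \<and> (\<forall>v. \<not> E v v)"

definition nbhd :: "'a set \<Rightarrow> ('a \<Rightarrow> 'a \<Rightarrow> bool) \<Rightarrow> 'a \<Rightarrow> 'a set" where
  "nbhd V E v = {u \<in> V. E v u}"

definition degree :: "'a set \<Rightarrow> ('a \<Rightarrow> 'a \<Rightarrow> bool) \<Rightarrow> 'a \<Rightarrow> nat" where
  "degree V E v = card (nbhd V E v)"

text \<open>N(S) = intersection of N(v), v in S (all of V for S empty)\<close>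
definition common_nbhd :: "'a set \<Rightarrow> ('a \<Rightarrow> 'a \<Rightarrow> bool) \<Rightarrow> 'a set \<Rightarrow> 'a set" where
  "common_nbhd V E S = {u \<in> V. \<forall>v \<in> S. E v u}"

definition W :: "'a set \<Rightarrow> ('a \<Rightarrow> 'a \<Rightarrow> bool) \<Rightarrow> real" where
  "W V E = (\<Sum>v\<in>V. 1 / real (card V - degree V E v))"

definition delta_set :: "'a set \<Rightarrow> ('a \<Rightarrow> 'a \<Rightarrow> bool) \<Rightarrow> 'a set \<Rightarrow> bool" where
  "delta_set V E S \<longleftrightarrow> S \<subseteq> V \<and> (\<forall>v \<in> S. int (degree V E v) \<le> int (card V) - int (card S))"

text \<open>generalized r-partite: V partitioned into r pairwise disjoint delta-sets
  V_0..V_{r-1} (given by a labelling f : V -> {0..<r}; parts may be empty)\<close>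
definition gen_partite :: "'a set \<Rightarrow> ('a \<Rightarrow> 'a \<Rightarrow> bool) \<Rightarrow> nat \<Rightarrow> bool" where
  "gen_partite V E r \<longleftrightarrow> (\<exists>f. (\<forall>v \<in> V. f v < r) \<and>
      (\<forall>i < r. delta_set V E {v \<in> V. f v = i}))"

definition phi :: "'a set \<Rightarrow> ('a \<Rightarrow> 'a \<Rightarrow> bool) \<Rightarrow> nat" where
  "phi V E = (LEAST r. gen_partite V E r)"

definition clique :: "'a set \<Rightarrow> ('a \<Rightarrow> 'a \<Rightarrow> bool) \<Rightarrow> 'a set \<Rightarrow> bool" where
  "clique V E K \<longleftrightarrow> K \<subseteq> V \<and> (\<forall>u \<in> K. \<forall>v \<in> K. u \<noteq> v \<longrightarrow> E u v)"

definition omega :: "'a set \<Rightarrow> ('a \<Rightarrow> 'a \<Rightarrow> bool) \<Rightarrow> nat" where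
  "omega V E = Max {card K | K. clique V E K}"

definition max_deg_in :: "'a set \<Rightarrow> ('a \<Rightarrow> 'a \<Rightarrow> bool) \<Rightarrow> 'a set \<Rightarrow> 'a \<Rightarrow> bool" where
  "max_deg_in V E S v \<longleftrightarrow> v \<in> S \<and>
     (\<forall>u \<in> S. card (nbhd V E u \<inter> S) \<le> card (nbhd V E v \<inter> S))"

text \<open>alpha-sequence v_1,...,v_r, stored as a list xs (xs ! (i-1) = v_i)\<close>
definition alpha_seq :: "'a set \<Rightarrow> ('a \<Rightarrow> 'a \<Rightarrow> bool) \<Rightarrow> 'a list \<Rightarrow> bool" where
  "alpha_seq V E xs \<longleftrightarrow> xs \<noteq> [] \<and>
     (xs ! 0 \<in> V \<and> (\<forall>u \<in> V. degree V E u \<le> degree V E (xs ! 0))) \<and>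
     (\<forall>i. 1 \<le> i \<and> i < length xs \<longrightarrow>
        max_deg_in V E (common_nbhd V E (set (take i xs))) (xs ! i))"

end

theory Submission
  imports Defs
begin

text \<open>Put \<open>A_k = N(v_1,...,v_k)\<close>, so \<open>A_0 = V\<close>. Because \<open>v_{k+1}\<close> has maximal degree
  in \<open>G[A_k]\<close>, every vertex of \<open>A_k\<close> has at most \<open>|A_{k+1}|\<close> neighbours inside \<open>A_k\<close> and
  at most \<open>n - |A_k|\<close> outside, so the layer \<open>A_k - A_{k+1}\<close> is a \<open>\<delta>\<close>-set. The layers for
  \<open>k < r - 1\<close> together with \<open>A_{r-1}\<close> partition \<open>V\<close> into \<open>r\<close> \<open>\<delta>\<close>-sets, giving
  \<open>\<phi>(G) \<le> r\<close>, and since a \<open>\<delta>\<close>-set \<open>P\<close> has \<open>W(P) \<le> 1\<close> also \<open>W(G) \<le> r\<close>. Finally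
  \<open>v_1,...,v_r\<close> are pairwise adjacent, giving \<open>r \<le> \<omega>(G)\<close>.\<close>

lemma delta_set_weight_le_one:
  assumes "finite V" and "delta_set V E P"
  shows "(\<Sum>v\<in>P. 1 / real (card V - degree V E v)) \<le> 1"
proof (cases "P = {}")
  case False
  have "finite P" using assms finite_subset by (auto simp: delta_set_def)
  then have P_pos: "card P > 0" using False by (simp add: card_gt_0_iff)
  have "(\<Sum>v\<in>P. 1 / real (card V - degree V E v)) \<le> real (card P) * (1 / real (card P))"
  proof (rule sum_bounded_above)
    fix v assume "v \<in> P"
    then have "card P \<le> card V - degree V E v"
      using assms(2) by (auto simp: delta_set_def)
    then show "1 / real (card V - degree V E v) \<le> 1 / real (card P)"
      using P_pos by (intro divide_left_mono) auto
  qed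
  then show ?thesis using P_pos by simp
qed simp

lemma gen_partite_W_le:
  assumes "finite V" and "gen_partite V E r"
  shows "W V E \<le> real r"
proof -
  obtain f where f_lt: "\<forall>v\<in>V. f v < r" and parts: "\<forall>i<r. delta_set V E {v \<in> V. f v = i}"
    using assms(2) by (auto simp: gen_partite_def)
  have "W V E = (\<Sum>i<r. \<Sum>v\<in>{v \<in> V. f v = i}. 1 / real (card V - degree V E v))"
    unfolding W_def by (rule sum.group[symmetric]) (use assms(1) f_lt in auto)
  also have "\<dots> \<le> (\<Sum>i<r. 1)"
    by (rule sum_mono) (use parts delta_set_weight_le_one[OF assms(1)] in auto)
  finally show ?thesis by simp
qed

lemma phi_le: "gen_partite V E r \<Longrightarrow> phi V E \<le> r"
  unfolding phi_def by (rule Least_le)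

lemma clique_card_le_omega:
  assumes "finite V" and "clique V E K"
  shows "card K \<le> omega V E"
proof -
  have "{card K | K. clique V E K} \<subseteq> card ` Pow V" by (auto simp: clique_def)
  then have "finite {card K | K. clique V E K}" using assms(1) finite_subset by blast
  then show ?thesis unfolding omega_def using assms(2) by (auto intro: Max_ge)
qed

lemma max_deg_in_delta_set:
  assumes "finite V" and "S \<subseteq> V" and "max_deg_in V E S x"
  shows "delta_set V E (S - nbhd V E x)"
  unfolding delta_set_def
proof (intro conjI ballI)
  show "S - nbhd V E x \<subseteq> V" using assms(2) by blast
  fix v assume v: "v \<in> S - nbhd V E x"
  have fin_S: "finite S" and fin_nbhd: "finite (nbhd V E v)"
    using assms(1,2) finite_subset by (auto simp: nbhd_def)
  have "degree V E v = card (nbhd V E v \<inter> S) + card (nbhd V E v - S)"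
    unfolding degree_def using fin_nbhd by (metis card_Int_Diff)
  also have "card (nbhd V E v \<inter> S) \<le> card (nbhd V E x \<inter> S)"
    using assms(3) v by (auto simp: max_deg_in_def)
  also have "card (nbhd V E v - S) \<le> card (V - S)"
    using assms(1) by (intro card_mono) (auto simp: nbhd_def)
  finally have "degree V E v \<le> card (nbhd V E x \<inter> S) + (card V - card S)"
    using assms(1,2) by (simp add: card_Diff_subset fin_S)
  moreover have "card (S - nbhd V E x) = card S - card (nbhd V E x \<inter> S)"
    by (metis Int_commute Diff_Int2 card_Diff_subset_Int fin_S finite_Int)
  moreover have "card S \<le> card V" using assms(1,2) by (rule card_mono)
  moreover have "card (nbhd V E x \<inter> S) \<le> card S" using fin_S by (intro card_mono) auto
  ultimately show "int (degree V E v) \<le> int (card V) - int (card (S - nbhd V E x))"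
    by linarith
qed

lemma decseq_Least_exit_iff:
  assumes chain: "decseq A" and "v \<in> A 0" and "k \<le> m"
  shows "(LEAST j. j = m \<or> v \<notin> A (Suc j)) = k \<longleftrightarrow> v \<in> A k \<and> (k = m \<or> v \<notin> A (Suc k))"
    (is "?exit = k \<longleftrightarrow> _")
proof
  have exit_out: "?exit = m \<or> v \<notin> A (Suc ?exit)" by (rule LeastI[of _ m]) simp
  have exit_in: "v \<in> A ?exit"
  proof (cases ?exit)
    case (Suc j)
    then have "j < ?exit" by simp
    then have "\<not> (j = m \<or> v \<notin> A (Suc j))" by (rule not_less_Least)
    then show ?thesis using Suc by simp
  qed (use assms(2) in simp)
  assume "?exit = k"
  then show "v \<in> A k \<and> (k = m \<or> v \<notin> A (Suc k))" using exit_in exit_out by simp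
next
  assume k: "v \<in> A k \<and> (k = m \<or> v \<notin> A (Suc k))"
  then show "?exit = k"
  proof (intro Least_equality)
    fix j assume j: "j = m \<or> v \<notin> A (Suc j)"
    show "k \<le> j"
    proof (rule ccontr)
      assume "\<not> k \<le> j"
      then have "A k \<subseteq> A (Suc j)" using chain by (simp add: decseqD)
      then show False using j k \<open>k \<le> m\<close> \<open>\<not> k \<le> j\<close> by auto
    qed
  qed simp
qed

lemma gen_partite_of_chain:
  assumes chain: "decseq A" and A0: "A 0 = V"
    and layers: "\<And>k. k < m \<Longrightarrow> delta_set V E (A k - A (Suc k))"
    and last: "delta_set V E (A m)"
  shows "gen_partite V E (Suc m)"
proof -
  define exit where "exit v = (LEAST j. j = m \<or> v \<notin> A (Suc j))" for v
  have A_sub: "A k \<subseteq> V" for k using decseqD[OF chain, of 0 k] A0 by simp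
  have "{v \<in> V. exit v = k} = (if k = m then A m else A k - A (Suc k))" if "k \<le> m" for k
    using decseq_Least_exit_iff[OF chain _ that] A0 A_sub unfolding exit_def by auto
  then have "\<forall>k < Suc m. delta_set V E {v \<in> V. exit v = k}"
    using layers last by simp
  moreover have "\<forall>v\<in>V. exit v < Suc m"
    unfolding exit_def by (simp add: Least_le le_imp_less_Suc)
  ultimately show ?thesis unfolding gen_partite_def by blast
qed

lemma decseq_common_nbhd_take: "decseq (\<lambda>k. common_nbhd V E (set (take k xs)))"
proof (rule decseq_SucI)
  fix k
  have "set (take k xs) \<subseteq> set (take (Suc k) xs)" by (rule set_take_subset_set_take) simp
  then show "common_nbhd V E (set (take (Suc k) xs)) \<subseteq> common_nbhd V E (set (take k xs))"
    by (auto simp: common_nbhd_def)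
qed

lemma common_nbhd_take_Suc:
  assumes "k < length xs"
  shows "common_nbhd V E (set (take (Suc k) xs)) = common_nbhd V E (set (take k xs)) \<inter> nbhd V E (xs ! k)"
  using assms by (auto simp: common_nbhd_def nbhd_def take_Suc_conv_app_nth)

lemma alpha_seq_max_deg_in:
  assumes "alpha_seq V E xs" and "k < length xs"
  shows "max_deg_in V E (common_nbhd V E (set (take k xs))) (xs ! k)"
proof (cases "k = 0")
  case True
  have "nbhd V E u \<inter> V = nbhd V E u" for u by (auto simp: nbhd_def)
  then show ?thesis
    using True assms(1) by (auto simp: alpha_seq_def max_deg_in_def common_nbhd_def degree_def)
next
  case False
  then show ?thesis using assms by (simp add: alpha_seq_def)
qed

lemma alpha_seq_adjacent:
  assumes "alpha_seq V E xs" and "i < j" and "j < length xs"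
  shows "E (xs ! i) (xs ! j)"
proof -
  have "xs ! j \<in> common_nbhd V E (set (take j xs))"
    using alpha_seq_max_deg_in[OF assms(1,3)] by (simp add: max_deg_in_def)
  moreover have "xs ! i \<in> set (take j xs)"
    using assms(2,3) by (auto simp: in_set_conv_nth intro!: exI[of _ i])
  ultimately show ?thesis by (simp add: common_nbhd_def)
qed

lemma alpha_seq_clique:
  assumes "simple_graph V E" and "alpha_seq V E xs"
  shows "clique V E (set xs)" and "distinct xs"
proof -
  have adj: "E (xs ! i) (xs ! j)" if "i \<noteq> j" "i < length xs" "j < length xs" for i j
    using that alpha_seq_adjacent[OF assms(2)] assms(1)
    by (cases "i < j") (auto simp: simple_graph_def)
  then show "distinct xs"
    using assms(1) by (fastforce simp: distinct_conv_nth simple_graph_def)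
  have "xs ! k \<in> V" if "k < length xs" for k
    using alpha_seq_max_deg_in[OF assms(2) that] by (simp add: max_deg_in_def common_nbhd_def)
  then have "set xs \<subseteq> V" by (auto simp: in_set_conv_nth)
  moreover have "E u v" if "u \<in> set xs" "v \<in> set xs" "u \<noteq> v" for u v
    using that adj by (metis in_set_conv_nth)
  ultimately show "clique V E (set xs)" by (simp add: clique_def)
qed

theorem theorem1:
  fixes V :: "'a set" and E :: "'a \<Rightarrow> 'a \<Rightarrow> bool" and xs :: "'a list" and r :: nat
  assumes "simple_graph V E"
    and "alpha_seq V E xs" and "length xs = r" and "r \<ge> 2"
    and "delta_set V E (common_nbhd V E (set (take (r - 1) xs)))"
  shows "phi V E \<le> r \<and> r \<le> omega V E \<and> real r \<ge> W V E"
proof -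
  have fin: "finite V" using assms(1) by (simp add: simple_graph_def)
  define A where "A k = common_nbhd V E (set (take k xs))" for k
  have "gen_partite V E (Suc (r - 1))"
  proof (rule gen_partite_of_chain)
    show "decseq A" unfolding A_def by (rule decseq_common_nbhd_take)
    show "A 0 = V" by (simp add: A_def common_nbhd_def)
    show "delta_set V E (A (r - 1))" using assms(5) by (simp add: A_def)
    fix k assume "k < r - 1"
    then have "k < length xs" using assms(3) by simp
    then have "A k - A (Suc k) = A k - nbhd V E (xs ! k)"
      unfolding A_def by (auto simp: common_nbhd_take_Suc)
    moreover have "delta_set V E (A k - nbhd V E (xs ! k))"
      using alpha_seq_max_deg_in[OF assms(2) \<open>k < length xs\<close>]
      by (intro max_deg_in_delta_set fin) (auto simp: A_def common_nbhd_def)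
    ultimately show "delta_set V E (A k - A (Suc k))" by simp
  qed
  then have partite: "gen_partite V E r" using assms(4) by simp
  have "r \<le> omega V E"
    using clique_card_le_omega[OF fin alpha_seq_clique(1)[OF assms(1,2)]]
      distinct_card[OF alpha_seq_clique(2)[OF assms(1,2)]] assms(3) by simp
  then show ?thesis using phi_le[OF partite] gen_partite_W_le[OF fin partite] by simp
qed

end
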